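(* Define rational functions of $t$ by $K_{r+1}=1-ty_{2r+1}$ and, for $k=r,r-1,\dots,2$, $K_k=1-ty_{2k-1}-\dfrac{ty_{2k}}{K_{k+1}}$. Then, as formal power series in $t$, $$\sum_{n\ge0}R_{1,n}t^n=\cfrac{R_{1,0}}{1-\cfrac{ty_1}{1-\cfrac{ty_2}{K_2}}},$$ where $y_{2\alpha-1}=\frac{R_{\alpha-1,0}R_{\alpha,1}}{R_{\alpha,0}R_{\alpha-1,1}}$ ($1\le\alpha\le r+1$) and $y_{2\alpha}=\frac{R_{\alpha-1,0}R_{\alpha+1,1}}{R_{\alpha,0}R_{\alpha,1}}$ ($1\le\alpha\le r$). (For $r=1$, $K_2=1-ty_3$.)
   Context: Fix $r\ge1$, $I_r=\{1,\dots,r\}$. Let $R_{1,0},\dots,R_{r,0},R_{1,1},\dots,R_{r,1}$ be algebraically independent indeterminates over $\mathbb Q$ and $(R_{\alpha,n})_{0\le\alpha\le r+1,n\in\mathbb Z}$ the $A_r$ $Q$-system: the unique family of nonzero elements of $\mathbb Q(R_{1,0},\dots,R_{r,1})$ with these initial values, $R_{0,n}=R_{r+1,n}=1$, and $R_{\alpha,n+1}R_{\alpha,n-1}=R_{\alpha,n}^2+R_{\alpha+1,n}R_{\alpha-1,n}$ ($\alpha\in I_r$, $n\in\mathbb Z$). *)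

theory Defs
  imports "HOL-Computational_Algebra.Formal_Power_Series"
begin

definition alg_indep_rat :: "nat \<Rightarrow> (nat \<Rightarrow> 'a::field_char_0) \<Rightarrow> bool" where
  "alg_indep_rat m x \<longleftrightarrow>
     (\<forall>(c :: (nat \<Rightarrow> nat) \<Rightarrow> rat) E.
        finite E \<and> E \<subseteq> {e. \<forall>i\<ge>m. e i = 0} \<and>
        (\<Sum>e\<in>E. of_rat (c e) * (\<Prod>i<m. x i ^ e i)) = 0
        \<longrightarrow> (\<forall>e\<in>E. c e = 0))"

end

theory Submission
  imports Defs
begin

(* Write E_k (0 <= k <= r+1) for the continuants of the J-fraction tail:
   E_{r+2} = 0, E_{r+1} = 1, E_k = (1 - t y_{2k+1}) E_{k+1} - t y_{2k+2} E_{k+2}.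
   Then K_k = E_{k-1} / E_k, and the right-hand side of the theorem equals
   R_{1,0} (E_1 - t y_2 E_2) / E_0.

   Let y_j(n) be the weights built from the time-shifted values R_{.,n}, R_{.,n+1}
   (so y_j = y_j(0)) and E_k(n) their continuants.  The Q-system implies a gauge
   relation E_k(n+1) = a_k E_k(n) + (1 - a_k) E_{k+1}(n) (k >= 1) with explicit
   scalars a_k(n); consequently E_0(n+1) = E_0(n) and the numerator at time n+1
   equals E_1(n).  Hence G(n) = R_{1,n} (E_1(n) - t y_2(n) E_2(n)) / E_0(n)
   satisfies G(n) = R_{1,n} + t G(n+1), which forces G(n) = sum_m R_{1,n+m} t^m. *)

lemma fps_div_div:
  fixes a b d :: "'a::field fps"
  assumes "fps_nth b 0 \<noteq> 0" and "fps_nth d 0 \<noteq> 0"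
  shows "a / (b / d) = a * d / b"
  using assms by (auto simp add: unit_eq_div1 unit_div_mult_swap unit_div_commute)

lemma fps_sub_div:
  fixes a b c :: "'a::field fps"
  assumes "fps_nth b 0 \<noteq> 0"
  shows "(a * b - c) / b = a - c / b"
  using assms by (auto simp add: unit_eq_div1 algebra_simps)

function continuant :: "nat \<Rightarrow> (nat \<Rightarrow> 'a::comm_ring_1) \<Rightarrow> nat \<Rightarrow> 'a fps" where
  "continuant r y k =
     (if r + 1 < k then 0 else if k = r + 1 then 1
      else (1 - fps_X * fps_const (y (2 * k + 1))) * continuant r y (k + 1)
           - fps_X * fps_const (y (2 * k + 2)) * continuant r y (k + 2))"
  by auto
termination by (relation "measure (\<lambda>(r, y, k). r + 2 - k)") auto

declare continuant.simps [simp del]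

lemma continuant_beyond [simp]: "r + 1 < k \<Longrightarrow> continuant r y k = 0"
  by (simp add: continuant.simps)

lemma continuant_top [simp]: "continuant r y (Suc r) = 1"
  by (simp add: continuant.simps)

lemma continuant_rec:
  "k \<le> r \<Longrightarrow> continuant r y k =
     (1 - fps_X * fps_const (y (2 * k + 1))) * continuant r y (k + 1)
     - fps_X * fps_const (y (2 * k + 2)) * continuant r y (k + 2)"
  by (subst continuant.simps) simp

lemma continuant_induct [case_names beyond step]:
  fixes r k :: nat
  assumes beyond: "\<And>k. r < k \<Longrightarrow> P k"
    and step: "\<And>k. k \<le> r \<Longrightarrow> P (k + 1) \<Longrightarrow> P (k + 2) \<Longrightarrow> P k"
  shows "P k"
proof (induction "r + 1 - k" arbitrary: k rule: less_induct)
  case less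
  show ?case
  proof (cases "k \<le> r")
    case True
    then show ?thesis using step less by simp
  next
    case False
    then show ?thesis using beyond by simp
  qed
qed

lemma continuant_nth_0: "k \<le> r + 1 \<Longrightarrow> fps_nth (continuant r y k) 0 = 1"
proof (induction k rule: continuant_induct[where r = r])
  case (beyond k)
  then have "k = Suc r" by simp
  then show ?case by simp
next
  case (step k)
  then show ?case by (simp add: continuant_rec)
qed

lemma continuant_cong:
  assumes "\<And>j. 1 \<le> j \<Longrightarrow> j \<le> 2 * r + 1 \<Longrightarrow> y j = y' j"
  shows "continuant r y k = continuant r y' k"
proof (induction k rule: continuant_induct[where r = r])
  case (beyond k)
  then show ?case by (cases "k = Suc r") simp_all
next
  case (step k)
  have "y (2 * k + 1) = y' (2 * k + 1)"
    using step.hyps assms by simp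
  moreover have "fps_const (y (2 * k + 2)) * continuant r y (k + 2)
               = fps_const (y' (2 * k + 2)) * continuant r y' (k + 2)"
  proof (cases "k = r")
    case False
    then show ?thesis using step assms by simp
  qed simp
  ultimately show ?case
    using step.hyps step.IH by (simp add: continuant_rec mult.assoc)
qed

lemma tail_fraction:
  fixes y :: "nat \<Rightarrow> 'a::field" and K :: "nat \<Rightarrow> 'a fps"
  assumes K_last: "K (r + 1) = 1 - fps_X * fps_const (y (2 * r + 1))"
    and K_rec: "\<forall>k\<in>{2..r}. K k = 1 - fps_X * fps_const (y (2 * k - 1))
                                   - fps_X * fps_const (y (2 * k)) / K (k + 1)"
    and "2 \<le> k" and "k \<le> r + 1"
  shows "K k = continuant r y (k - 1) / continuant r y k"
  using \<open>k \<le> r + 1\<close> \<open>2 \<le> k\<close>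
proof (induction k rule: inc_induct)
  case base
  have "continuant r y r = 1 - fps_X * fps_const (y (2 * r + 1))"
    by (simp add: continuant_rec)
  then show ?case using K_last by simp
next
  case (step k)
  let ?E = "continuant r y"
  have units: "fps_nth (?E k) 0 \<noteq> 0" "fps_nth (?E (k + 1)) 0 \<noteq> 0"
    using step.hyps by (simp_all add: continuant_nth_0)
  have rec: "?E (k - 1) = (1 - fps_X * fps_const (y (2 * k - 1))) * ?E k
                          - fps_X * fps_const (y (2 * k)) * ?E (k + 1)"
  proof -
    have "2 * (k - 1) + 1 = 2 * k - 1" "2 * (k - 1) + 2 = 2 * k" "k - 1 + 1 = k" "k - 1 + 2 = k + 1"
      using step.prems by simp_all
    then show ?thesis using continuant_rec[of "k - 1" r y] step.hyps by simp
  qed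
  have "K k = 1 - fps_X * fps_const (y (2 * k - 1))
              - fps_X * fps_const (y (2 * k)) / (?E k / ?E (k + 1))"
    using K_rec step by simp
  also have "\<dots> = 1 - fps_X * fps_const (y (2 * k - 1))
                   - fps_X * fps_const (y (2 * k)) * ?E (k + 1) / ?E k"
    using units by (simp add: fps_div_div)
  also have "\<dots> = ?E (k - 1) / ?E k"
    unfolding rec by (rule fps_sub_div[OF units(1), symmetric])
  finally show ?case .
qed

lemma continued_fraction_eq:
  fixes y :: "nat \<Rightarrow> 'a::field" and K :: "nat \<Rightarrow> 'a fps"
  assumes "r \<ge> 1"
    and K_last: "K (r + 1) = 1 - fps_X * fps_const (y (2 * r + 1))"
    and K_rec: "\<forall>k\<in>{2..r}. K k = 1 - fps_X * fps_const (y (2 * k - 1))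
                                   - fps_X * fps_const (y (2 * k)) / K (k + 1)"
  shows "fps_const c / (1 - fps_X * fps_const (y 1) / (1 - fps_X * fps_const (y 2) / K 2))
         = fps_const c * (continuant r y 1 - fps_X * fps_const (y 2) * continuant r y 2)
           / continuant r y 0"
proof -
  let ?E = "continuant r y"
  define N where "N = ?E 1 - fps_X * fps_const (y 2) * ?E 2"
  have units: "fps_nth (?E 0) 0 \<noteq> 0" "fps_nth (?E 1) 0 \<noteq> 0" "fps_nth (?E 2) 0 \<noteq> 0"
    using \<open>r \<ge> 1\<close> by (simp_all add: continuant_nth_0)
  then have unit_N: "fps_nth N 0 \<noteq> 0"
    by (simp add: N_def continuant_nth_0)
  have E0: "?E 0 = 1 * N - fps_X * fps_const (y 1) * ?E 1"
    using continuant_rec[of 0 r y] by (simp add: N_def algebra_simps numeral_2_eq_2)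
  have "1 - fps_X * fps_const (y 2) / K 2 = 1 - fps_X * fps_const (y 2) / (?E 1 / ?E 2)"
    using tail_fraction[OF K_last K_rec, of 2] \<open>r \<ge> 1\<close> by simp
  also have "\<dots> = 1 - fps_X * fps_const (y 2) * ?E 2 / ?E 1"
    using units by (simp add: fps_div_div)
  also have "\<dots> = (1 * ?E 1 - fps_X * fps_const (y 2) * ?E 2) / ?E 1"
    by (rule fps_sub_div[OF units(2), symmetric])
  finally have inner: "1 - fps_X * fps_const (y 2) / K 2 = N / ?E 1"
    by (simp add: N_def)
  have "1 - fps_X * fps_const (y 1) / (N / ?E 1) = 1 - fps_X * fps_const (y 1) * ?E 1 / N"
    using units unit_N by (simp add: fps_div_div)
  also have "\<dots> = ?E 0 / N"
    unfolding E0 by (rule fps_sub_div[OF unit_N, symmetric])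
  finally have outer: "1 - fps_X * fps_const (y 1) / (N / ?E 1) = ?E 0 / N" .
  show ?thesis
    unfolding inner outer N_def[symmetric] using units unit_N by (simp add: fps_div_div)
qed

text \<open>This is the algebraic core of the time shift
  \<open>n \<mapsto> n + 1\<close> of the Q-system.\<close>
locale continuant_gauge =
  fixes r :: nat and y y' a b :: "nat \<Rightarrow> 'a::comm_ring_1"
  assumes coeff_sum: "\<And>k. 1 \<le> k \<Longrightarrow> k \<le> r + 1 \<Longrightarrow> a k + b k = 1"
    and coeff_last: "b (r + 1) = 0"
    and odd_a: "\<And>k. k \<le> r \<Longrightarrow> y' (2 * k + 1) * a (k + 1) = a k * y (2 * k + 1)"
    and odd_b: "\<And>k. k \<le> r \<Longrightarrow> y' (2 * k + 1) * b (k + 1) = a k * y (2 * k + 2)"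
    and even_a: "\<And>k. k \<le> r \<Longrightarrow> y' (2 * k + 2) * a (k + 2) = b (k + 1) * y (2 * k + 3)"
    and even_b: "\<And>k. k \<le> r \<Longrightarrow> y' (2 * k + 2) * b (k + 2) = b (k + 1) * y (2 * k + 4)"
begin

abbreviation E :: "nat \<Rightarrow> 'a fps" where "E \<equiv> continuant r y"
abbreviation E' :: "nat \<Rightarrow> 'a fps" where "E' \<equiv> continuant r y'"

definition gauged :: "nat \<Rightarrow> bool" where
  "gauged k \<longleftrightarrow> E' k = fps_const (a k) * E k + fps_const (b k) * E (k + 1)"

lemma numerator_step:
  assumes "k \<le> r" and gauged_1: "gauged (k + 1)" and gauged_2: "gauged (k + 2)"
  shows "E' (k + 1) - fps_X * fps_const (y' (2 * k + 2)) * E' (k + 2) = E (k + 1)"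
proof -
  let ?c = "\<lambda>j. fps_const (y j)" and ?c' = "\<lambda>j. fps_const (y' j)"
    and ?b1 = "fps_const (b (k + 1))"
  have next_rec: "?b1 * (E (k + 1) - E (k + 2))
      = - fps_X * ?b1 * (?c (2 * k + 3) * E (k + 2) + ?c (2 * k + 4) * E (k + 3))"
  proof (cases "k + 1 \<le> r")
    case True
    have idx: "2 * (k + 1) + 1 = 2 * k + 3" "2 * (k + 1) + 2 = 2 * k + 4" "k + 1 + 1 = k + 2"
      "k + 1 + 2 = k + 3" by simp_all
    have rec: "E (k + 1) = (1 - fps_X * ?c (2 * k + 3)) * E (k + 2) - fps_X * ?c (2 * k + 4) * E (k + 3)"
      using continuant_rec[OF True, of y] unfolding idx .
    show ?thesis unfolding rec by (simp add: algebra_simps del: fps_const_mult)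
  next
    case False
    then have "k = r" using \<open>k \<le> r\<close> by simp
    then show ?thesis using coeff_last by simp
  qed
  have ea: "?c' (2 * k + 2) * fps_const (a (k + 2)) = ?b1 * ?c (2 * k + 3)"
    using even_a[OF \<open>k \<le> r\<close>] by simp
  have eb: "?c' (2 * k + 2) * fps_const (b (k + 2)) = ?b1 * ?c (2 * k + 4)"
    using even_b[OF \<open>k \<le> r\<close>] by simp
  let ?T = "fps_X * ?b1 * (?c (2 * k + 3) * E (k + 2) + ?c (2 * k + 4) * E (k + 3))"
  have "fps_X * ?c' (2 * k + 2) * E' (k + 2)
      = fps_X * ((?c' (2 * k + 2) * fps_const (a (k + 2))) * E (k + 2)
                 + (?c' (2 * k + 2) * fps_const (b (k + 2))) * E (k + 3))"
    using gauged_2 by (simp add: gauged_def algebra_simps numeral_3_eq_3 del: fps_const_mult)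
  also have "\<dots> = ?T"
    unfolding ea eb by (simp add: algebra_simps del: fps_const_mult)
  finally have shifted: "fps_X * ?c' (2 * k + 2) * E' (k + 2) = ?T" .
  have "E' (k + 1) - fps_X * ?c' (2 * k + 2) * E' (k + 2)
      = fps_const (a (k + 1)) * E (k + 1) + ?b1 * E (k + 2) - ?T"
    using gauged_1 shifted by (simp add: gauged_def)
  also have "\<dots> = fps_const (a (k + 1)) * E (k + 1) + ?b1 * E (k + 2) + ?b1 * (E (k + 1) - E (k + 2))"
    using next_rec by simp
  also have "\<dots> = (fps_const (a (k + 1)) + ?b1) * E (k + 1)"
    by (simp add: algebra_simps del: fps_const_mult fps_const_add)
  also have "\<dots> = E (k + 1)"
    using coeff_sum[of "k + 1"] \<open>k \<le> r\<close> by simp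
  finally show ?thesis .
qed

lemma gauge_step:
  assumes "k \<le> r" and gauged_1: "gauged (k + 1)" and gauged_2: "gauged (k + 2)"
  shows "E' k = E (k + 1) + fps_const (a k) * (E k - E (k + 1))"
proof -
  let ?c = "\<lambda>j. fps_const (y j)" and ?c' = "\<lambda>j. fps_const (y' j)"
  have oa: "?c' (2 * k + 1) * fps_const (a (k + 1)) = fps_const (a k) * ?c (2 * k + 1)"
    using odd_a[OF \<open>k \<le> r\<close>] by simp
  have ob: "?c' (2 * k + 1) * fps_const (b (k + 1)) = fps_const (a k) * ?c (2 * k + 2)"
    using odd_b[OF \<open>k \<le> r\<close>] by simp
  have "E' k = (E' (k + 1) - fps_X * ?c' (2 * k + 2) * E' (k + 2)) - fps_X * ?c' (2 * k + 1) * E' (k + 1)"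
    using continuant_rec[OF \<open>k \<le> r\<close>, of y'] by (simp add: algebra_simps)
  also have "\<dots> = E (k + 1) - fps_X * ((?c' (2 * k + 1) * fps_const (a (k + 1))) * E (k + 1)
                                    + (?c' (2 * k + 1) * fps_const (b (k + 1))) * E (k + 2))"
    using numerator_step[OF assms] gauged_1
    by (simp add: gauged_def algebra_simps del: fps_const_mult)
  also have "\<dots> = E (k + 1) - fps_const (a k) * fps_X * (?c (2 * k + 1) * E (k + 1) + ?c (2 * k + 2) * E (k + 2))"
    unfolding oa ob by (simp add: algebra_simps del: fps_const_mult)
  also have "\<dots> = E (k + 1) + fps_const (a k) * (E k - E (k + 1))"
    unfolding continuant_rec[OF \<open>k \<le> r\<close>, of y] by (simp add: algebra_simps del: fps_const_mult)
  finally show ?thesis .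
qed

lemma gauged_all: "1 \<le> k \<Longrightarrow> gauged k"
proof (induction k rule: continuant_induct[where r = r])
  case (beyond k)
  show ?case
  proof (cases "k = r + 1")
    case True
    then show ?thesis using coeff_sum[of "r + 1"] coeff_last by (simp add: gauged_def)
  next
    case False
    with beyond show ?thesis by (simp add: gauged_def)
  qed
next
  case (step k)
  then have "gauged (k + 1)" "gauged (k + 2)" by simp_all
  then have step_eq: "E' k = E (k + 1) + fps_const (a k) * (E k - E (k + 1))"
    using gauge_step step.hyps by blast
  have "b k = 1 - a k"
    using coeff_sum[of k] step by (simp add: eq_diff_eq add.commute)
  then have b_eq: "fps_const (b k) = 1 - fps_const (a k)" by (simp flip: fps_const_1_eq_1)
  show ?case unfolding gauged_def step_eq b_eq by (simp add: algebra_simps)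
qed

lemma gauge_numerator: "E' 1 - fps_X * fps_const (y' 2) * E' 2 = E 1"
  using numerator_step[of 0] gauged_all by (simp add: numeral_2_eq_2)

lemma gauge_0: "a 0 = 1 \<Longrightarrow> E' 0 = E 0"
  using gauge_step[of 0] gauged_all by (simp add: numeral_2_eq_2)

end

lemma fps_of_shift_recursion:
  fixes G :: "int \<Rightarrow> 'a::comm_ring_1 fps" and c :: "int \<Rightarrow> 'a"
  assumes shift: "\<And>n. G n = fps_const (c n) + fps_X * G (n + 1)"
  shows "G n = Abs_fps (\<lambda>m. c (n + int m))"
proof -
  have "\<forall>n. fps_nth (G n) m = c (n + int m)" for m
  proof (induction m)
    case 0
    show ?case by (subst shift) simp
  next
    case (Suc m)
    show ?case by (subst shift) (simp add: Suc algebra_simps)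
  qed
  then show ?thesis by (simp add: fps_eq_iff)
qed

locale A_Q_system =
  fixes r :: nat and R :: "nat \<Rightarrow> int \<Rightarrow> 'a::field"
  assumes nonzero: "\<forall>\<alpha>\<le>r + 1. \<forall>n. R \<alpha> n \<noteq> 0"
    and boundary_0: "\<forall>n. R 0 n = 1"
    and boundary_top: "\<forall>n. R (r + 1) n = 1"
    and Q_system: "\<forall>\<alpha>\<in>{1..r}. \<forall>n. R \<alpha> (n + 1) * R \<alpha> (n - 1) = (R \<alpha> n)\<^sup>2 + R (\<alpha> + 1) n * R (\<alpha> - 1) n"
begin

text \<open>Extension by \<open>R_(r+2) = 0\<close>: this is the value forced by the Q-system at \<open>\<alpha> = r + 1\<close>,
  and it makes the weights and gauge coefficients vanish uniformly beyond level \<open>r\<close>.\<close>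
definition Rx :: "nat \<Rightarrow> int \<Rightarrow> 'a" where
  "Rx \<alpha> n = (if \<alpha> \<le> r + 1 then R \<alpha> n else 0)"

lemma Rx_nonzero: "\<alpha> \<le> r + 1 \<Longrightarrow> Rx \<alpha> n \<noteq> 0"
  using nonzero by (simp add: Rx_def)

lemma Rx_0 [simp]: "Rx 0 n = 1"
  using boundary_0 by (simp add: Rx_def)

lemma Rx_top [simp]: "Rx (Suc r) n = 1"
  using boundary_top by (simp add: Rx_def)

lemma Rx_beyond [simp]: "Suc (Suc r) \<le> \<alpha> \<Longrightarrow> Rx \<alpha> n = 0"
  by (simp add: Rx_def)

lemma Rx_Q_system:
  assumes "1 \<le> \<alpha>" and "\<alpha> \<le> r + 1"
  shows "Rx \<alpha> (n + 1) * Rx \<alpha> (n - 1) = (Rx \<alpha> n)\<^sup>2 + Rx (\<alpha> + 1) n * Rx (\<alpha> - 1) n"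
proof (cases "\<alpha> = r + 1")
  case True
  then show ?thesis by simp
next
  case False
  then show ?thesis using assms Q_system by (simp add: Rx_def)
qed

definition weight :: "int \<Rightarrow> nat \<Rightarrow> 'a" where
  "weight n j = (if odd j
     then Rx (j div 2) n * Rx (j div 2 + 1) (n + 1) / (Rx (j div 2 + 1) n * Rx (j div 2) (n + 1))
     else Rx (j div 2 - 1) n * Rx (j div 2 + 1) (n + 1) / (Rx (j div 2) n * Rx (j div 2) (n + 1)))"

lemma weight_odd: "weight n (2 * k + 1) = Rx k n * Rx (k + 1) (n + 1) / (Rx (k + 1) n * Rx k (n + 1))"
  by (simp add: weight_def)

lemma weight_even: "weight n (2 * k + 2) = Rx k n * Rx (k + 2) (n + 1) / (Rx (k + 1) n * Rx (k + 1) (n + 1))"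
  by (simp add: weight_def)

definition gauge_a :: "int \<Rightarrow> nat \<Rightarrow> 'a" where
  "gauge_a n k = (Rx k (n + 1))\<^sup>2 / (Rx k n * Rx k (n + 2))"

definition gauge_b :: "int \<Rightarrow> nat \<Rightarrow> 'a" where
  "gauge_b n k = Rx (k + 1) (n + 1) * Rx (k - 1) (n + 1) / (Rx k n * Rx k (n + 2))"

text \<open>This is where the Q-system enters: \<open>a_k + b_k = 1\<close> is the Q-system equation at time
  \<open>n + 1\<close>.  The four relations below are identities of rational functions in the \<open>R\<close>.\<close>
lemma gauge_sum:
  assumes "1 \<le> k" and "k \<le> r + 1"
  shows "gauge_a n k + gauge_b n k = 1"
proof -
  have "(Rx k (n + 1))\<^sup>2 + Rx (k + 1) (n + 1) * Rx (k - 1) (n + 1) = Rx k n * Rx k (n + 2)"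
    using Rx_Q_system[OF assms, of "n + 1"] by (simp add: add.assoc mult.commute)
  then show ?thesis
    using Rx_nonzero[OF assms(2)] by (simp add: gauge_a_def gauge_b_def add_divide_distrib[symmetric])
qed

lemma odd_a:
  assumes "k \<le> r"
  shows "weight (n + 1) (2 * k + 1) * gauge_a n (k + 1) = gauge_a n k * weight n (2 * k + 1)"
proof -
  have "Rx k m \<noteq> 0" "Rx (k + 1) m \<noteq> 0" for m
    using Rx_nonzero assms by simp_all
  then show ?thesis
    unfolding weight_odd gauge_a_def by (simp add: field_simps power2_eq_square)
qed

lemma odd_b:
  assumes "k \<le> r"
  shows "weight (n + 1) (2 * k + 1) * gauge_b n (k + 1) = gauge_a n k * weight n (2 * k + 2)"
proof -
  have "Rx k m \<noteq> 0" "Rx (k + 1) m \<noteq> 0" for m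
    using Rx_nonzero assms by simp_all
  then show ?thesis
    unfolding weight_odd weight_even gauge_a_def gauge_b_def by (simp add: field_simps power2_eq_square)
qed

lemma weight_odd': "weight n (2 * k + 3) = Rx (k + 1) n * Rx (k + 2) (n + 1) / (Rx (k + 2) n * Rx (k + 1) (n + 1))"
  using weight_odd[of n "k + 1"] by (simp add: numeral_3_eq_3 numeral_2_eq_2)

lemma weight_even': "weight n (2 * k + 4) = Rx (k + 1) n * Rx (k + 3) (n + 1) / (Rx (k + 2) n * Rx (k + 2) (n + 1))"
  using weight_even[of n "k + 1"] by (simp add: numeral_3_eq_3 numeral_2_eq_2 eval_nat_numeral)

lemma even_a:
  assumes "k \<le> r"
  shows "weight (n + 1) (2 * k + 2) * gauge_a n (k + 2) = gauge_b n (k + 1) * weight n (2 * k + 3)"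
proof (cases "k = r")
  case True
  then show ?thesis unfolding weight_even gauge_b_def by simp
next
  case False
  then have "Rx k m \<noteq> 0" "Rx (k + 1) m \<noteq> 0" "Rx (k + 2) m \<noteq> 0" for m
    using Rx_nonzero assms by simp_all
  then show ?thesis
    unfolding weight_even weight_odd' gauge_a_def gauge_b_def by (simp add: field_simps power2_eq_square)
qed

lemma even_b:
  assumes "k \<le> r"
  shows "weight (n + 1) (2 * k + 2) * gauge_b n (k + 2) = gauge_b n (k + 1) * weight n (2 * k + 4)"
proof (cases "k = r")
  case True
  then show ?thesis unfolding weight_even gauge_b_def by simp
next
  case False
  then have "Rx k m \<noteq> 0" "Rx (k + 1) m \<noteq> 0" "Rx (k + 2) m \<noteq> 0" for m
    using Rx_nonzero assms by simp_all
  then show ?thesis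
    unfolding weight_even weight_even' gauge_b_def
    by (simp add: field_simps power2_eq_square numeral_3_eq_3)
qed

lemma continuant_gauge: "continuant_gauge r (weight n) (weight (n + 1)) (gauge_a n) (gauge_b n)"
proof
  show "gauge_b n (r + 1) = 0" by (simp add: gauge_b_def)
qed (fact gauge_sum odd_a odd_b even_a even_b)+

definition numerator :: "int \<Rightarrow> 'a fps" where
  "numerator n = continuant r (weight n) 1 - fps_X * fps_const (weight n 2) * continuant r (weight n) 2"

definition genfun :: "int \<Rightarrow> 'a fps" where
  "genfun n = fps_const (R 1 n) * numerator n / continuant r (weight n) 0"

text \<open>Under the time shift the denominator is invariant (here \<open>a_0 = 1\<close> because \<open>R_0 = 1\<close>)
  and the numerator becomes the continuant \<open>E_1\<close> of the previous time.\<close>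
lemma denominator_shift: "continuant r (weight (n + 1)) 0 = continuant r (weight n) 0"
  by (rule continuant_gauge.gauge_0[OF continuant_gauge]) (simp add: gauge_a_def)

lemma numerator_shift: "numerator (n + 1) = continuant r (weight n) 1"
  unfolding numerator_def by (rule continuant_gauge.gauge_numerator[OF continuant_gauge])

lemma genfun_shift: "genfun n = fps_const (R 1 n) + fps_X * genfun (n + 1)"
proof -
  let ?E = "continuant r (weight n)" and ?c = "\<lambda>x. fps_const x"
  have unit: "fps_nth (?E 0) 0 \<noteq> 0" by (simp add: continuant_nth_0)
  have R1: "R 1 n \<noteq> 0" using nonzero by simp
  have E0: "?E 0 = numerator n - fps_X * fps_const (weight n 1) * ?E 1"
    using continuant_rec[of 0 r "weight n"] by (simp add: numerator_def algebra_simps numeral_2_eq_2)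
  have w1: "?c (R 1 n) * ?c (weight n 1) = ?c (R 1 (n + 1))"
    using weight_odd[of n 0] R1 boundary_0 by (simp add: Rx_def)
  have "genfun (n + 1) * ?E 0 = genfun (n + 1) * continuant r (weight (n + 1)) 0"
    by (simp add: denominator_shift)
  also have "\<dots> = ?c (R 1 (n + 1)) * ?E 1"
    by (simp add: genfun_def numerator_shift continuant_nth_0)
  finally have shifted: "genfun (n + 1) * ?E 0 = ?c (R 1 (n + 1)) * ?E 1" .
  have "(?c (R 1 n) + fps_X * genfun (n + 1)) * ?E 0
      = ?c (R 1 n) * numerator n - fps_X * (?c (R 1 n) * ?c (weight n 1)) * ?E 1
        + fps_X * (genfun (n + 1) * ?E 0)"
    unfolding E0 by (simp add: algebra_simps del: fps_const_mult)
  also have "\<dots> = ?c (R 1 n) * numerator n"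
    unfolding w1 shifted by simp
  finally show ?thesis
    using unit by (simp add: genfun_def unit_eq_div1)
qed

lemma genfun_eq: "genfun n = Abs_fps (\<lambda>m. R 1 (n + int m))"
  by (rule fps_of_shift_recursion) (rule genfun_shift)

lemma weight_initial:
  assumes y_odd: "\<forall>\<alpha>\<in>{1..r + 1}. y (2 * \<alpha> - 1) = (R (\<alpha> - 1) 0 * R \<alpha> 1) / (R \<alpha> 0 * R (\<alpha> - 1) 1)"
    and y_even: "\<forall>\<alpha>\<in>{1..r}. y (2 * \<alpha>) = (R (\<alpha> - 1) 0 * R (\<alpha> + 1) 1) / (R \<alpha> 0 * R \<alpha> 1)"
    and "1 \<le> j" and "j \<le> 2 * r + 1"
  shows "y j = weight 0 j"
proof (cases "odd j")
  case True
  then obtain k where j: "j = 2 * k + 1" by (rule oddE)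
  with \<open>j \<le> 2 * r + 1\<close> have "k \<le> r" by simp
  moreover have "y (2 * (k + 1) - 1) = R k 0 * R (k + 1) 1 / (R (k + 1) 0 * R k 1)"
    using y_odd[rule_format, of "k + 1"] \<open>k \<le> r\<close> by simp
  ultimately show ?thesis unfolding j weight_odd by (simp add: Rx_def)
next
  case False
  then obtain m where "j = 2 * m" by (auto elim: evenE)
  with \<open>1 \<le> j\<close> have j: "j = 2 * (m - 1) + 2" by simp
  define k where "k = m - 1"
  with j \<open>j \<le> 2 * r + 1\<close> have "k + 1 \<le> r" by simp
  moreover have "y (2 * (k + 1)) = R k 0 * R (k + 2) 1 / (R (k + 1) 0 * R (k + 1) 1)"
    using y_even[rule_format, of "k + 1"] \<open>k + 1 \<le> r\<close> by (simp add: numeral_2_eq_2)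
  ultimately show ?thesis unfolding j k_def[symmetric] weight_even by (simp add: Rx_def)
qed

end

theorem mainTheorem9:
  fixes r :: nat
    and R :: "nat \<Rightarrow> int \<Rightarrow> 'a::field_char_0"
    and y :: "nat \<Rightarrow> 'a"
    and K :: "nat \<Rightarrow> 'a fps"
  assumes r_pos: "r \<ge> 1"
    and indep: "alg_indep_rat (2 * r) (\<lambda>i. if i < r then R (i + 1) 0 else R (i - r + 1) 1)"
    and nonzero: "\<forall>\<alpha>\<le>r + 1. \<forall>n. R \<alpha> n \<noteq> 0"
    and bd0: "\<forall>n. R 0 n = 1"
    and bdr: "\<forall>n. R (r + 1) n = 1"
    and qsys: "\<forall>\<alpha>\<in>{1..r}. \<forall>n. R \<alpha> (n + 1) * R \<alpha> (n - 1) = (R \<alpha> n)\<^sup>2 + R (\<alpha> + 1) n * R (\<alpha> - 1) n"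
    and y_odd: "\<forall>\<alpha>\<in>{1..r + 1}. y (2 * \<alpha> - 1) = (R (\<alpha> - 1) 0 * R \<alpha> 1) / (R \<alpha> 0 * R (\<alpha> - 1) 1)"
    and y_even: "\<forall>\<alpha>\<in>{1..r}. y (2 * \<alpha>) = (R (\<alpha> - 1) 0 * R (\<alpha> + 1) 1) / (R \<alpha> 0 * R \<alpha> 1)"
    and K_last: "K (r + 1) = 1 - fps_X * fps_const (y (2 * r + 1))"
    and K_rec: "\<forall>k\<in>{2..r}. K k = 1 - fps_X * fps_const (y (2 * k - 1))
                                   - fps_X * fps_const (y (2 * k)) / K (k + 1)"
  shows "Abs_fps (\<lambda>n. R 1 (int n)) =
           fps_const (R 1 0) /
             (1 - fps_X * fps_const (y 1) / (1 - fps_X * fps_const (y 2) / K 2))"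
proof -
  interpret A_Q_system r R
    using nonzero bd0 bdr qsys by unfold_locales
  have y_eq: "\<And>j. 1 \<le> j \<Longrightarrow> j \<le> 2 * r + 1 \<Longrightarrow> y j = weight 0 j"
    using weight_initial[OF y_odd y_even] .
  have "fps_const (R 1 0) / (1 - fps_X * fps_const (y 1) / (1 - fps_X * fps_const (y 2) / K 2))
      = fps_const (R 1 0) * (continuant r y 1 - fps_X * fps_const (y 2) * continuant r y 2)
        / continuant r y 0"
    by (rule continued_fraction_eq[OF r_pos K_last K_rec])
  also have "\<dots> = genfun 0"
    using continuant_cong[OF y_eq] y_eq[of 2] r_pos by (simp add: genfun_def numerator_def)
  also have "\<dots> = Abs_fps (\<lambda>n. R 1 (int n))"
    using genfun_eq[of 0] by simp
  finally show ?thesis ..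
qed

end
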